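(* Let $\Omega$ be a convex subset of $M_{n\times n}(\mathbb{C})$ and let $\Omega_s$ be the set of all nonsingular matrices in $\Omega$ that have $n$ distinct eigenvalues. If the closure $\overline{\Omega}$ contains at least one nonsingular matrix with $n$ distinct eigenvalues, then $\Omega_s$ is dense in $\Omega$.
   Context: $M_{n\times n}(\mathbb{C})$ denotes the set of $n\times n$ complex matrices, equipped with the topology induced by the Frobenius norm $\|A\|_F=(\sum_{i,j}|a_{ij}|^2)^{1/2}$. *)

theory Defs
  imports "HOL-Analysis.Analysis"
begin

text \<open>n x n complex matrices are modelled as complex ^'n^'n (n = CARD('n)).
  The norm on this type is the Euclidean norm of all entries, i.e. the Frobenius norm.\<close>

definition mat_eigenvalue :: "complex^'n^'n \<Rightarrow> complex \<Rightarrow> bool" where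
  "mat_eigenvalue A c \<longleftrightarrow> (\<exists>v. v \<noteq> 0 \<and> A *v v = c *s v)"

definition mat_eigenvalues :: "complex^'n^'n \<Rightarrow> complex set" where
  "mat_eigenvalues A = {c. mat_eigenvalue A c}"

definition distinct_eigs :: "complex^'n^'n \<Rightarrow> bool" where
  "distinct_eigs A \<longleftrightarrow> card (mat_eigenvalues A) = CARD('n)"

end

theory Submission
  imports Defs
    "HOL-Computational_Algebra.Fundamental_Theorem_Algebra"
    "HOL-Computational_Algebra.Field_as_Ring"
    "Subresultants.Subresultant_Gcd"
    "Jordan_Normal_Form.Char_Poly"
begin

text \<open>
  Call a matrix good if it is invertible with n distinct eigenvalues.  Fix X and Y and look at
  the line (1 - t) X + t Y.  The coefficients of its characteristic polynomial p are polynomials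
  in t, and the matrix is good exactly when p(0) \<noteq> 0 and the resultant of p and p' is nonzero.
  This is the nonvanishing of a single polynomial in t, so if it holds at one point of the line
  it fails at only finitely many.  Now take C in the relative interior of \<Omega> and a good
  matrix B in its closure: the half-open segment from C to B lies in \<Omega>, and all but finitely
  many of its points are good, so C is a limit of good points of \<Omega>.  Since \<Omega> lies in the
  closure of its relative interior, this gives the density.
\<close>

lemma card_roots_eq_degree_iff_rsquarefree:
  fixes p :: "complex poly"
  assumes "p \<noteq> 0"
  shows "card {x. poly p x = 0} = degree p \<longleftrightarrow> rsquarefree p"
proof -
  let ?S = "{x. poly p x = 0}"
  have fin: "finite ?S"
    using assms by (rule poly_roots_finite)
  have order_pos: "order x p \<ge> 1" if "x \<in> ?S" for x
    using that assms by (simp add: order_root)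
  have "degree p = (\<Sum>x\<in>?S. order x p)"
    using assms size_proots_complex[of p] by (simp add: size_multiset_overloaded_eq)
  also have "\<dots> = (\<Sum>x\<in>?S. (order x p - 1) + 1)"
    using order_pos by (intro sum.cong refl) (metis le_add_diff_inverse2)
  also have "\<dots> = (\<Sum>x\<in>?S. order x p - 1) + card ?S"
    by (simp only: sum.distrib card_eq_sum)
  finally have "card ?S = degree p \<longleftrightarrow> (\<Sum>x\<in>?S. order x p - 1) = 0"
    by linarith
  also have "\<dots> \<longleftrightarrow> (\<forall>x\<in>?S. order x p - 1 = 0)"
    using fin by (rule sum_eq_0_iff)
  also have "\<dots> \<longleftrightarrow> (\<forall>x\<in>?S. order x p = 1)"
    using order_pos by (metis le_antisym diff_is_0_eq)
  also have "\<dots> \<longleftrightarrow> rsquarefree p"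
    using assms unfolding rsquarefree_def by (simp add: order_root) (metis neq0_conv)
  finally show ?thesis .
qed

lemma rsquarefree_iff_resultant_pderiv_nonzero:
  fixes p :: "complex poly"
  assumes "p \<noteq> 0"
  shows "rsquarefree p \<longleftrightarrow> resultant p (pderiv p) \<noteq> 0"
proof -
  let ?g = "gcd p (pderiv p)"
  have "?g \<noteq> 0"
    using assms by simp
  have "degree ?g \<noteq> 0 \<longleftrightarrow> (\<exists>a. poly ?g a = 0)"
  proof
    assume "degree ?g \<noteq> 0"
    then show "\<exists>a. poly ?g a = 0"
      by (simp add: alg_closed_imp_poly_has_root)
  next
    assume "\<exists>a. poly ?g a = 0"
    then obtain a where "[:-a, 1:] dvd ?g"
      by (auto simp: poly_eq_0_iff_dvd)
    from dvd_imp_degree_le[OF this \<open>?g \<noteq> 0\<close>] show "degree ?g \<noteq> 0"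
      by simp
  qed
  also have "\<dots> \<longleftrightarrow> (\<exists>a. poly p a = 0 \<and> poly (pderiv p) a = 0)"
    by (simp add: poly_eq_0_iff_dvd)
  finally show ?thesis
    by (simp add: rsquarefree_roots resultant_0_gcd)
qed

lemma invertible_iff_not_mat_eigenvalue_0:
  "invertible M \<longleftrightarrow> \<not> mat_eigenvalue M 0"
  by (auto simp: invertible_left_inverse matrix_left_invertible_ker mat_eigenvalue_def)

no_notation Matrix.vec_index (infixl "$" 100)

definition vec_of_cart :: "(nat \<Rightarrow> 'n) \<Rightarrow> 'a^'n \<Rightarrow> 'a vec" where
  "vec_of_cart e v = Matrix.vec CARD('n) (\<lambda>i. v $ e i)"

definition mat_of_cart :: "(nat \<Rightarrow> 'n) \<Rightarrow> 'a^'n^'n \<Rightarrow> 'a mat" where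
  "mat_of_cart e M = Matrix.mat CARD('n) CARD('n) (\<lambda>(i, j). M $ e i $ e j)"

lemma vec_of_cart_carrier [simp]: "vec_of_cart e v \<in> carrier_vec CARD('n)"
  for v :: "'a^'n"
  by (simp add: vec_of_cart_def)

lemma mat_of_cart_carrier [simp]: "mat_of_cart e M \<in> carrier_mat CARD('n) CARD('n)"
  for M :: "'a^'n^'n"
  by (simp add: mat_of_cart_def)

lemma dim_row_mat_of_cart [simp]: "dim_row (mat_of_cart e M) = CARD('n)"
  for M :: "'a^'n^'n"
  by (simp add: mat_of_cart_def)

lemma vec_of_cart_0 [simp]: "vec_of_cart e (0 :: 'a::zero^'n) = 0\<^sub>v CARD('n)"
  by (rule eq_vecI) (simp_all add: vec_of_cart_def)

lemma vec_of_cart_smult: "vec_of_cart e (c *s v) = c \<cdot>\<^sub>v vec_of_cart e v"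
  by (rule eq_vecI) (simp_all add: vec_of_cart_def)

lemma mat_of_cart_mult_vec:
  fixes M :: "'a::comm_semiring_1^'n^'n"
  assumes e: "bij_betw e {..<CARD('n)} UNIV"
  shows "mat_of_cart e M *\<^sub>v vec_of_cart e v = vec_of_cart e (M *v v)"
proof (rule eq_vecI)
  fix i assume "i < dim_vec (vec_of_cart e (M *v v))"
  then have i: "i < CARD('n)"
    by (simp add: vec_of_cart_def)
  have "vec_index (mat_of_cart e M *\<^sub>v vec_of_cart e v) i = (\<Sum>j<CARD('n). M $ e i $ e j * v $ e j)"
    using i by (simp add: mat_of_cart_def vec_of_cart_def scalar_prod_def lessThan_atLeast0)
  also have "\<dots> = (\<Sum>k\<in>UNIV. M $ e i $ k * v $ k)"
    by (rule sum.reindex_bij_betw[OF e])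
  also have "\<dots> = vec_index (vec_of_cart e (M *v v)) i"
    using i by (simp add: matrix_vector_mult_def vec_of_cart_def)
  finally show "vec_index (mat_of_cart e M *\<^sub>v vec_of_cart e v) i = vec_index (vec_of_cart e (M *v v)) i" .
qed (simp add: mat_of_cart_def vec_of_cart_def)

lemma inj_vec_of_cart:
  fixes e :: "nat \<Rightarrow> 'n::finite"
  assumes e: "bij_betw e {..<CARD('n)} UNIV"
  shows "inj (vec_of_cart e :: 'a^'n \<Rightarrow> 'a vec)"
proof (rule injI)
  fix v w :: "'a^'n"
  assume eq: "vec_of_cart e v = vec_of_cart e w"
  show "v = w"
  unfolding Finite_Cartesian_Product.vec_eq_iff
  proof
    fix k
    obtain i where "i < CARD('n)" "e i = k"
      using e by (metis UNIV_I bij_betw_iff_bijections lessThan_iff)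
    then show "v $ k = w $ k"
      using arg_cong[OF eq, of "\<lambda>u. vec_index u i"] by (simp add: vec_of_cart_def)
  qed
qed

lemma vec_of_cart_eq_0_iff:
  fixes e :: "nat \<Rightarrow> 'n::finite" and v :: "'a::zero^'n"
  assumes e: "bij_betw e {..<CARD('n)} UNIV"
  shows "vec_of_cart e v = 0\<^sub>v CARD('n) \<longleftrightarrow> v = 0"
  using inj_vec_of_cart[OF e] by (metis vec_of_cart_0 inj_eq)

lemma range_vec_of_cart:
  fixes e :: "nat \<Rightarrow> 'n::finite"
  assumes e: "bij_betw e {..<CARD('n)} UNIV"
  shows "range (vec_of_cart e :: 'a^'n \<Rightarrow> 'a vec) = carrier_vec CARD('n)"
proof
  show "carrier_vec CARD('n) \<subseteq> range (vec_of_cart e :: 'a^'n \<Rightarrow> 'a vec)"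
  proof
    fix w :: "'a vec"
    assume w: "w \<in> carrier_vec CARD('n)"
    have "w = vec_of_cart e (\<chi> k. vec_index w (inv_into {..<CARD('n)} e k))"
      using w bij_betw_imp_inj_on[OF e] by (intro eq_vecI) (auto simp: vec_of_cart_def)
    then show "w \<in> range (vec_of_cart e)"
      by blast
  qed
qed auto

lemma mat_eigenvalue_iff_eigenvalue_mat_of_cart:
  fixes M :: "complex^'n^'n"
  assumes e: "bij_betw e {..<CARD('n)} UNIV"
  shows "mat_eigenvalue M c \<longleftrightarrow> eigenvalue (mat_of_cart e M) c"
proof -
  have "eigenvalue (mat_of_cart e M) c \<longleftrightarrow>
      (\<exists>w\<in>range (vec_of_cart e). w \<noteq> 0\<^sub>v CARD('n) \<and> mat_of_cart e M *\<^sub>v w = c \<cdot>\<^sub>v w)"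
    by (simp add: range_vec_of_cart[OF e] eigenvalue_def eigenvector_def Bex_def)
  also have "\<dots> \<longleftrightarrow> (\<exists>v. v \<noteq> 0 \<and> M *v v = c *s v)"
    using inj_vec_of_cart[OF e, where 'a = complex]
    by (simp add: vec_of_cart_eq_0_iff[OF e] mat_of_cart_mult_vec[OF e] inj_eq
        flip: vec_of_cart_smult)
  finally show ?thesis
    by (simp add: mat_eigenvalue_def)
qed

lemma mat_eigenvalues_eq_roots_char_poly:
  fixes M :: "complex^'n^'n"
  assumes e: "bij_betw e {..<CARD('n)} UNIV"
  shows "mat_eigenvalues M = {c. poly (char_poly (mat_of_cart e M)) c = 0}"
  by (simp add: mat_eigenvalues_def mat_eigenvalue_iff_eigenvalue_mat_of_cart[OF e]
      eigenvalue_root_char_poly[OF mat_of_cart_carrier])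

lemma invertible_distinct_eigs_iff_char_poly:
  fixes M :: "complex^'n^'n"
  assumes e: "bij_betw e {..<CARD('n)} UNIV"
  defines "P \<equiv> char_poly (mat_of_cart e M)"
  shows "invertible M \<and> distinct_eigs M \<longleftrightarrow> poly P 0 \<noteq> 0 \<and> resultant P (pderiv P) \<noteq> 0"
proof -
  have deg: "degree P = CARD('n)" and "P \<noteq> 0"
    using degree_monic_char_poly[OF mat_of_cart_carrier, of e M] by (auto simp: P_def)
  have roots: "mat_eigenvalues M = {c. poly P c = 0}"
    unfolding P_def by (rule mat_eigenvalues_eq_roots_char_poly[OF e])
  have "invertible M \<longleftrightarrow> poly P 0 \<noteq> 0"
    using roots by (simp add: invertible_iff_not_mat_eigenvalue_0 mat_eigenvalues_def set_eq_iff)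
  moreover have "distinct_eigs M \<longleftrightarrow> card {c. poly P c = 0} = degree P"
    by (simp add: distinct_eigs_def roots deg)
  moreover note card_roots_eq_degree_iff_rsquarefree[OF \<open>P \<noteq> 0\<close>]
    rsquarefree_iff_resultant_pderiv_nonzero[OF \<open>P \<noteq> 0\<close>]
  ultimately show ?thesis
    by simp
qed

lemma char_poly_map_mat_eval:
  fixes T :: "'a::{idom, ring_char_0} poly mat" and x :: 'a
  assumes T: "T \<in> carrier_mat n n"
  defines "P \<equiv> char_poly T" and "P\<^sub>x \<equiv> char_poly (map_mat (\<lambda>q. poly q x) T)"
  shows "resultant P\<^sub>x (pderiv P\<^sub>x) = poly (resultant P (pderiv P)) x"
    and "poly P\<^sub>x 0 = poly (coeff P 0) x"
proof -
  have P\<^sub>x: "P\<^sub>x = map_poly (\<lambda>q. poly q x) P"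
    unfolding P_def P\<^sub>x_def by (rule poly_hom.char_poly_hom[OF T])
  have deg: "degree P\<^sub>x = degree P"
    using degree_monic_char_poly[OF T] degree_monic_char_poly[of "map_mat (\<lambda>q. poly q x) T" n] T
    by (simp add: P_def P\<^sub>x_def)
  then have "degree (map_poly (\<lambda>q. poly q x) (pderiv P)) = degree (pderiv P)"
    by (simp add: P\<^sub>x poly_hom.map_poly_pderiv degree_pderiv)
  then show "resultant P\<^sub>x (pderiv P\<^sub>x) = poly (resultant P (pderiv P)) x"
    using deg unfolding P\<^sub>x poly_hom.map_poly_pderiv[symmetric]
    by (rule poly_hom.resultant_map_poly[rotated])
  show "poly P\<^sub>x 0 = poly (coeff P 0) x"
    by (simp add: P\<^sub>x poly_0_coeff_0)
qed

definition generic_on_lines :: "('a::real_vector \<Rightarrow> bool) \<Rightarrow> bool" where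
  "generic_on_lines P \<longleftrightarrow> (\<forall>X Y. P Y \<longrightarrow> finite {t::real. \<not> P ((1 - t) *\<^sub>R X + t *\<^sub>R Y)})"

lemma generic_on_lines_invertible_distinct_eigs:
  "generic_on_lines (\<lambda>M :: complex^'n^'n. invertible M \<and> distinct_eigs M)"
  unfolding generic_on_lines_def
proof (intro allI impI)
  fix X Y :: "complex^'n^'n"
  assume Y: "invertible Y \<and> distinct_eigs Y"
  obtain e :: "nat \<Rightarrow> 'n" where e: "bij_betw e {..<CARD('n)} UNIV"
    using ex_bij_betw_nat_finite[of "UNIV :: 'n set"] by (auto simp: atLeast0LessThan)
  \<comment> \<open>T is X + x (Y - X) with entries in \<open>complex poly\<close>; evaluating x at t gives the line.\<close>
  define T where
    "T = Matrix.mat CARD('n) CARD('n) (\<lambda>(i, j). [:X $ e i $ e j, (Y - X) $ e i $ e j:])"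
  define P where "P = char_poly T"
  define Q where "Q = coeff P 0 * resultant P (pderiv P)"
  have T: "T \<in> carrier_mat CARD('n) CARD('n)"
    by (simp add: T_def)
  have good_iff: "invertible ((1 - t) *\<^sub>R X + t *\<^sub>R Y) \<and> distinct_eigs ((1 - t) *\<^sub>R X + t *\<^sub>R Y)
      \<longleftrightarrow> poly Q (of_real t) \<noteq> 0" for t
  proof -
    have "map_mat (\<lambda>q. poly q (of_real t)) T = mat_of_cart e ((1 - t) *\<^sub>R X + t *\<^sub>R Y)"
      by (rule eq_matI) (auto simp: T_def mat_of_cart_def scaleR_conv_of_real[where 'a = complex] algebra_simps)
    then show ?thesis
      using char_poly_map_mat_eval[OF T, of "of_real t"]
      by (simp add: invertible_distinct_eigs_iff_char_poly[OF e] Q_def P_def)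
  qed
  have "Q \<noteq> 0"
    using good_iff[of 1] Y by auto
  then have "finite (complex_of_real -` {z. poly Q z = 0})"
    by (intro finite_vimageI poly_roots_finite) (simp_all add: inj_on_def)
  then show "finite {t. \<not> (invertible ((1 - t) *\<^sub>R X + t *\<^sub>R Y) \<and> distinct_eigs ((1 - t) *\<^sub>R X + t *\<^sub>R Y))}"
    by (simp add: good_iff)
qed

lemma endpoint_in_closure_image_Ioo_diff_finite:
  fixes f :: "real \<Rightarrow> 'a::topological_space"
  assumes "a < b" and "continuous_on {a..b} f" and "finite F"
  shows "f a \<in> closure (f ` ({a<..<b} - F))"
proof -
  let ?S = "{a<..<b} - F"
  have "a islimpt {a<..<b}"
    using \<open>a < b\<close> by (rule islimpt_greaterThanLessThan1)
  then have "a islimpt F \<union> ?S"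
    by (rule islimpt_subset) auto
  then have "a islimpt ?S"
    using islimpt_Un_finite[OF \<open>finite F\<close>] by blast
  then have "a \<in> closure ?S"
    by (simp add: closure_def)
  moreover have "closure ?S \<subseteq> {a..b}"
    using closure_mono[of ?S "{a<..<b}"] \<open>a < b\<close> by auto
  then have "f ` closure ?S \<subseteq> closure (f ` ?S)"
    by (intro image_closure_subset continuous_on_subset[OF assms(2)] closed_closure closure_subset)
  ultimately show ?thesis
    by blast
qed

lemma convex_subset_closure_generic_on_lines:
  fixes \<Omega> :: "'a::euclidean_space set"
  assumes \<Omega>: "convex \<Omega>" and P: "generic_on_lines P" and B: "B \<in> closure \<Omega>" "P B"
  shows "\<Omega> \<subseteq> closure {A\<in>\<Omega>. P A}"
proof -
  have "C \<in> closure {A\<in>\<Omega>. P A}" if C: "C \<in> rel_interior \<Omega>" for C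
  proof -
    define f where "f t = (1 - t) *\<^sub>R C + t *\<^sub>R B" for t :: real
    define F where "F = {t. \<not> P (f t)}"
    have "finite F"
      using P B(2) unfolding generic_on_lines_def F_def f_def by blast
    have good: "f ` ({0<..<1} - F) \<subseteq> {A\<in>\<Omega>. P A}"
    proof (rule image_subsetI)
      fix t assume t: "t \<in> {0<..<1} - F"
      have "f t = B - (1 - t) *\<^sub>R (B - C)"
        by (simp add: f_def algebra_simps)
      also have "\<dots> \<in> rel_interior \<Omega>"
        using t by (intro rel_interior_closure_convex_shrink[OF \<Omega> C B(1)]) auto
      finally show "f t \<in> {A\<in>\<Omega>. P A}"
        using t rel_interior_subset by (auto simp: F_def)
    qed
    have "continuous_on {0..1} f"
      unfolding f_def by (intro continuous_intros)
    then have "f 0 \<in> closure (f ` ({0<..<1} - F))"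
      using \<open>finite F\<close> by (intro endpoint_in_closure_image_Ioo_diff_finite) simp_all
    also have "\<dots> \<subseteq> closure {A\<in>\<Omega>. P A}"
      using good by (rule closure_mono)
    finally show ?thesis
      by (simp add: f_def)
  qed
  then have "closure (rel_interior \<Omega>) \<subseteq> closure {A\<in>\<Omega>. P A}"
    by (intro closure_minimal) auto
  then show ?thesis
    using convex_closure_rel_interior[OF \<Omega>] closure_subset by blast
qed

theorem theorem3p6:
  fixes \<Omega> :: "(complex^'n^'n) set"
  assumes "convex \<Omega>"
    and "\<exists>A\<in>closure \<Omega>. invertible A \<and> distinct_eigs A"
  shows "\<Omega> \<subseteq> closure {A\<in>\<Omega>. invertible A \<and> distinct_eigs A}"
  using assms convex_subset_closure_generic_on_lines[OF _ generic_on_lines_invertible_distinct_eigs]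
  by blast

end
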